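(* For $n\ge3$, the priority lattice $\Pi(n)$ is not distributive.
   Context: $[n]_0=\{0,\dots,n\}$. A priority forest on $[n]_0$ is a rooted forest with vertex set $[n]_0$ whose component trees $T_0,T_1,\dots$ are increasing (each non-root vertex has a larger label than its parent) and satisfy: for $j<k$ every label of $T_j$ is smaller than every label of $T_k$. The priority lattice $\Pi(n)$ is the set of priority forests on $[n]_0$, ordered by $P\le P'$ iff $E(P)\subseteq E(P')$, together with an extra element $\hat1$ greater than all priority forests; it is a lattice. *)

theory Defs
  imports Main
begin

text \<open>A rooted forest on the vertex set {0..n} is encoded by its edge set
  E, a set of pairs (parent, child). Roots are the vertices without a parent.\<close>

definition is_increasing_forest :: "nat \<Rightarrow> (nat \<times> nat) set \<Rightarrow> bool" where
  "is_increasing_forest n E \<longleftrightarrow>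
     E \<subseteq> {0..n} \<times> {0..n}
   \<and> (\<forall>(p, c) \<in> E. p < c)
   \<and> (\<forall>c p p'. (p, c) \<in> E \<longrightarrow> (p', c) \<in> E \<longrightarrow> p = p')"

definition component :: "(nat \<times> nat) set \<Rightarrow> nat \<Rightarrow> nat set" where
  "component E x = {y. (x, y) \<in> (E \<union> E\<inverse>)\<^sup>*}"

definition is_priority_forest :: "nat \<Rightarrow> (nat \<times> nat) set \<Rightarrow> bool" where
  "is_priority_forest n E \<longleftrightarrow>
     is_increasing_forest n E
   \<and> (\<forall>x\<in>{0..n}. \<forall>y\<in>{0..n}. component E x \<noteq> component E y \<longrightarrow>
        (\<forall>a\<in>component E x. \<forall>b\<in>component E y. a < b)
      \<or> (\<forall>a\<in>component E x. \<forall>b\<in>component E y. b < a))"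

text \<open>Elements of the priority lattice: Some E for a priority forest with
  edge set E, and None for the extra top element.\<close>
definition priority_lattice :: "nat \<Rightarrow> (nat \<times> nat) set option set" where
  "priority_lattice n = Some ` {E. is_priority_forest n E} \<union> {None}"

fun pl_le :: "(nat \<times> nat) set option \<Rightarrow> (nat \<times> nat) set option \<Rightarrow> bool" where
  "pl_le _ None = True"
| "pl_le None (Some _) = False"
| "pl_le (Some E) (Some E') = (E \<subseteq> E')"

definition is_join :: "'a set \<Rightarrow> ('a \<Rightarrow> 'a \<Rightarrow> bool) \<Rightarrow> 'a \<Rightarrow> 'a \<Rightarrow> 'a \<Rightarrow> bool" where
  "is_join A le x y j \<longleftrightarrow> j \<in> A \<and> le x j \<and> le y j
     \<and> (\<forall>u\<in>A. le x u \<longrightarrow> le y u \<longrightarrow> le j u)"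

definition is_meet :: "'a set \<Rightarrow> ('a \<Rightarrow> 'a \<Rightarrow> bool) \<Rightarrow> 'a \<Rightarrow> 'a \<Rightarrow> 'a \<Rightarrow> bool" where
  "is_meet A le x y m \<longleftrightarrow> m \<in> A \<and> le m x \<and> le m y
     \<and> (\<forall>u\<in>A. le u x \<longrightarrow> le u y \<longrightarrow> le u m)"

definition distributive_lattice_on :: "'a set \<Rightarrow> ('a \<Rightarrow> 'a \<Rightarrow> bool) \<Rightarrow> bool" where
  "distributive_lattice_on A le \<longleftrightarrow>
     (\<forall>x\<in>A. \<forall>y\<in>A. \<forall>z\<in>A. \<forall>j m a b s.
        is_join A le y z j \<longrightarrow> is_meet A le x j m \<longrightarrow>
        is_meet A le x y a \<longrightarrow> is_meet A le x z b \<longrightarrow> is_join A le a b s \<longrightarrow>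
        m = s)"

end

theory Submission imports Defs begin

text \<open>Take the forests x = {2 \<rightarrow> 3}, y = {1 \<rightarrow> 2} and z = {0 \<rightarrow> 1, 0 \<rightarrow> 2}.
  Any forest containing y and z would give vertex 2 two parents, so the join of y and z
  is the top element and x \<sqinter> (y \<squnion> z) = x. On the other hand x shares no edge with
  y or z, so both meets x \<sqinter> y and x \<sqinter> z are the empty forest, and so is their join.\<close>

lemma component_refl: "x \<in> component E x"
  unfolding component_def by simp

lemma edge_in_component: "(p, c) \<in> E \<Longrightarrow> c \<in> component E p"
  unfolding component_def by auto

lemma component_eq:
  assumes "y \<in> component E x"
  shows "component E y = component E x"
proof -
  have "sym ((E \<union> E\<inverse>)\<^sup>*)"
    by (simp add: sym_Un_converse sym_rtrancl)
  then have "(y, x) \<in> (E \<union> E\<inverse>)\<^sup>*"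
    using assms unfolding component_def by (auto dest: symD)
  with assms show ?thesis
    unfolding component_def by (auto intro: rtrancl_trans)
qed

lemma component_subset_block:
  assumes "E \<subseteq> B \<times> B" "x \<in> B"
  shows "component E x \<subseteq> B"
proof
  fix y assume "y \<in> component E x"
  then have "(x, y) \<in> (E \<union> E\<inverse>)\<^sup>*"
    unfolding component_def by simp
  then show "y \<in> B"
    by induction (use assms in auto)
qed

lemma component_outside_block:
  assumes "E \<subseteq> B \<times> B" "x \<notin> B"
  shows "component E x = {x}"
proof -
  have "(x, y) \<in> (E \<union> E\<inverse>)\<^sup>* \<Longrightarrow> y = x" for y
    by (induction rule: rtrancl_induct) (use assms in auto)
  then show ?thesis
    unfolding component_def by auto
qed

lemma priority_forest_one_block:
  assumes forest: "is_increasing_forest n E"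
    and block: "E \<subseteq> {a..b} \<times> {a..b}"
    and connected: "{a..b} \<subseteq> component E a"
  shows "is_priority_forest n E"
proof -
  have comp: "component E x = (if x \<in> {a..b} then {a..b} else {x})" for x
  proof (cases "x \<in> {a..b}")
    case True
    then have "component E x = component E a"
      using connected by (intro component_eq) auto
    moreover have "component E a \<subseteq> {a..b}"
      using True by (intro component_subset_block[OF block]) auto
    ultimately show ?thesis
      using True connected by auto
  qed (use component_outside_block[OF block] in auto)
  show ?thesis
    unfolding is_priority_forest_def comp using forest by auto
qed

lemma Some_in_priority_lattice_iff [simp]:
  "Some E \<in> priority_lattice n \<longleftrightarrow> is_priority_forest n E"
  unfolding priority_lattice_def by auto

lemma None_in_priority_lattice [simp]: "None \<in> priority_lattice n"
  unfolding priority_lattice_def by simp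

lemma pl_le_refl [simp]: "pl_le u u"
  by (cases u) auto

lemma pl_le_Some_iff: "pl_le u (Some E) \<longleftrightarrow> (\<exists>F. u = Some F \<and> F \<subseteq> E)"
  by (cases u) auto

lemma is_join_self:
  "u \<in> priority_lattice n \<Longrightarrow> is_join (priority_lattice n) pl_le u u u"
  unfolding is_join_def by simp

lemma is_meet_None:
  "u \<in> priority_lattice n \<Longrightarrow> is_meet (priority_lattice n) pl_le u None u"
  unfolding is_meet_def by simp

lemma is_meet_Int:
  assumes "is_priority_forest n (E \<inter> E')"
  shows "is_meet (priority_lattice n) pl_le (Some E) (Some E') (Some (E \<inter> E'))"
  unfolding is_meet_def using assms by (auto simp: pl_le_Some_iff)

lemma is_join_None_if_two_parents:
  assumes "(p, c) \<in> E" "(p', c) \<in> E'" "p \<noteq> p'"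
  shows "is_join (priority_lattice n) pl_le (Some E) (Some E') None"
proof -
  have "pl_le None u"
    if "u \<in> priority_lattice n" "pl_le (Some E) u" "pl_le (Some E') u" for u
  proof (cases u)
    case (Some F)
    with that have "is_increasing_forest n F" "(p, c) \<in> F" "(p', c) \<in> F"
      using assms by (auto simp: is_priority_forest_def)
    with \<open>p \<noteq> p'\<close> show ?thesis
      unfolding is_increasing_forest_def by blast
  qed simp
  then show ?thesis
    unfolding is_join_def by simp
qed

theorem lemma5p5:
  fixes n :: nat
  assumes "n \<ge> 3"
  shows "\<not> distributive_lattice_on (priority_lattice n) pl_le"
proof
  assume distrib: "distributive_lattice_on (priority_lattice n) pl_le"
  define x y z :: "(nat \<times> nat) set"
    where "x = {(2, 3)}" and "y = {(1, 2)}" and "z = {(0, 1), (0, 2)}"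
  have forests: "is_priority_forest n x" "is_priority_forest n y" "is_priority_forest n z"
    "is_priority_forest n {}"
    using priority_forest_one_block[of n x 2 3] priority_forest_one_block[of n y 1 2]
      priority_forest_one_block[of n z 0 2] priority_forest_one_block[of n "{}" 0 0] assms
    unfolding x_def y_def z_def
    by (auto simp: is_increasing_forest_def atLeastAtMost_insertL[symmetric]
        component_refl edge_in_component)
  have "x \<inter> y = {}" "x \<inter> z = {}"
    unfolding x_def y_def z_def by auto
  then have "is_meet (priority_lattice n) pl_le (Some x) (Some y) (Some {})"
    "is_meet (priority_lattice n) pl_le (Some x) (Some z) (Some {})"
    using is_meet_Int[of n] forests(4) by metis+
  moreover have "is_join (priority_lattice n) pl_le (Some y) (Some z) None"
    unfolding y_def z_def by (rule is_join_None_if_two_parents[of 1 2 _ 0]) auto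
  ultimately have "Some x = Some {}"
    using distrib forests is_meet_None is_join_self
    unfolding distributive_lattice_on_def by (metis Some_in_priority_lattice_iff)
  then show False
    unfolding x_def by simp
qed

end
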